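(* Let $H$ be a bipartite graph and let $k_1 = \min \max(|A|,|B|)$ and $k_2 = \min \min(|A|,|B|)$, where both minima range over all partitions $(A,B)$ of $V(H)$ into two independent sets. Assume $k_2 \ge 2$. Let $G$ be an $n$-vertex graph with chromatic number $\chi$ and independence number $\alpha$. If $k_2 \ge 3$, then $$\chi_H(G) \le \min\left\{ \frac{n}{k_1-1} + \frac{k_1-2}{k_1-1}\chi,\ \frac{n}{k_2-1}\left(1 - \frac{1}{\chi}\right) + \frac{k_2-2}{k_2-1}(\chi - 1) + 1 \right\}.$$ If $k_2 = 2$, then $$\chi_H(G) \le \min\left\{ \frac{n}{k_1-1} + \frac{k_1-2}{k_1-1}\chi,\ n - \alpha + 1 \right\}.$$
   Context: All graphs are finite and simple. For a fixed bipartite graph $H$, a proper vertex coloring of a graph $G$ is called an $H$-avoiding coloring if for any two color classes, the subgraph of $G$ induced by their union contains no induced subgraph isomorphic to $H$. $\chi_H(G)$ denotes the minimum number of colors in an $H$-avoiding coloring of $G$. *)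

theory Defs
  imports Complex_Main
begin

definition simple_graph :: "'a set \<Rightarrow> ('a \<Rightarrow> 'a \<Rightarrow> bool) \<Rightarrow> bool" where
  "simple_graph V E \<longleftrightarrow> finite V \<and> (\<forall>u v. E u v \<longrightarrow> u \<in> V \<and> v \<in> V)
     \<and> (\<forall>u v. E u v \<longrightarrow> E v u) \<and> (\<forall>u. \<not> E u u)"

definition independent :: "('a \<Rightarrow> 'a \<Rightarrow> bool) \<Rightarrow> 'a set \<Rightarrow> bool" where
  "independent E S \<longleftrightarrow> (\<forall>u\<in>S. \<forall>v\<in>S. \<not> E u v)"

definition bipartitions :: "'a set \<Rightarrow> ('a \<Rightarrow> 'a \<Rightarrow> bool) \<Rightarrow> ('a set \<times> 'a set) set" where
  "bipartitions V E = {(A, B). A \<union> B = V \<and> A \<inter> B = {} \<and> independent E A \<and> independent E B}"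

definition bipartite :: "'a set \<Rightarrow> ('a \<Rightarrow> 'a \<Rightarrow> bool) \<Rightarrow> bool" where
  "bipartite V E \<longleftrightarrow> bipartitions V E \<noteq> {}"

definition bip_k1 :: "'a set \<Rightarrow> ('a \<Rightarrow> 'a \<Rightarrow> bool) \<Rightarrow> nat" where
  "bip_k1 V E = Min ((\<lambda>(A, B). max (card A) (card B)) ` bipartitions V E)"

definition bip_k2 :: "'a set \<Rightarrow> ('a \<Rightarrow> 'a \<Rightarrow> bool) \<Rightarrow> nat" where
  "bip_k2 V E = Min ((\<lambda>(A, B). min (card A) (card B)) ` bipartitions V E)"

definition proper_coloring :: "'a set \<Rightarrow> ('a \<Rightarrow> 'a \<Rightarrow> bool) \<Rightarrow> ('a \<Rightarrow> nat) \<Rightarrow> nat \<Rightarrow> bool" where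
  "proper_coloring V E c k \<longleftrightarrow> (\<forall>v\<in>V. c v < k) \<and> (\<forall>u v. E u v \<longrightarrow> c u \<noteq> c v)"

definition chromatic_number :: "'a set \<Rightarrow> ('a \<Rightarrow> 'a \<Rightarrow> bool) \<Rightarrow> nat" where
  "chromatic_number V E = (LEAST k. \<exists>c. proper_coloring V E c k)"

definition independence_number :: "'a set \<Rightarrow> ('a \<Rightarrow> 'a \<Rightarrow> bool) \<Rightarrow> nat" where
  "independence_number V E = Max (card ` {S. S \<subseteq> V \<and> independent E S})"

definition has_induced_copy ::
  "'b set \<Rightarrow> ('b \<Rightarrow> 'b \<Rightarrow> bool) \<Rightarrow> 'a set \<Rightarrow> ('a \<Rightarrow> 'a \<Rightarrow> bool) \<Rightarrow> bool" where
  "has_induced_copy VH EH S E \<longleftrightarrow>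
     (\<exists>f. inj_on f VH \<and> f ` VH \<subseteq> S \<and> (\<forall>u\<in>VH. \<forall>v\<in>VH. EH u v \<longleftrightarrow> E (f u) (f v)))"

definition H_avoiding_coloring ::
  "'b set \<Rightarrow> ('b \<Rightarrow> 'b \<Rightarrow> bool) \<Rightarrow> 'a set \<Rightarrow> ('a \<Rightarrow> 'a \<Rightarrow> bool) \<Rightarrow> ('a \<Rightarrow> nat) \<Rightarrow> nat \<Rightarrow> bool" where
  "H_avoiding_coloring VH EH V E c k \<longleftrightarrow> proper_coloring V E c k \<and>
     (\<forall>i j. \<not> has_induced_copy VH EH {v\<in>V. c v = i \<or> c v = j} E)"

definition chi_H ::
  "'b set \<Rightarrow> ('b \<Rightarrow> 'b \<Rightarrow> bool) \<Rightarrow> 'a set \<Rightarrow> ('a \<Rightarrow> 'a \<Rightarrow> bool) \<Rightarrow> nat" where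
  "chi_H VH EH V E = (LEAST k. \<exists>c. H_avoiding_coloring VH EH V E c k)"

end

theory Submission
  imports Defs "HOL-Library.Disjoint_Sets"
begin

text \<open>If an induced copy of \<open>H\<close> lies in the union of two colour classes \<open>S\<close> and \<open>T\<close> of a
  proper colouring, its vertices in \<open>S\<close> and in \<open>T\<close> form a bipartition \<open>(A, B)\<close> of \<open>H\<close>, so
  \<open>min |S| |T| \<ge> k2\<close> and \<open>max |S| |T| \<ge> k1\<close>. Hence a proper colouring in which any two
  classes have minimum size below \<open>k2\<close> or maximum size below \<open>k1\<close> is \<open>H\<close>-avoiding.
  Such colourings are obtained by refining an optimal colouring: cutting every class into
  pieces of size at most \<open>k1 - 1\<close> gives the first bound; keeping a largest class (of size
  at least \<open>n / \<chi>\<close>) and cutting the others into pieces of size at most \<open>k2 - 1\<close> gives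
  the second; for \<open>k2 = 2\<close>, a maximum independent set together with singletons gives
  \<open>n - \<alpha> + 1\<close>.\<close>

lemma finite_bipartitions:
  assumes "simple_graph VH EH"
  shows "finite (bipartitions VH EH)"
proof (rule finite_subset)
  show "bipartitions VH EH \<subseteq> Pow VH \<times> Pow VH"
    unfolding bipartitions_def by auto
  show "finite (Pow VH \<times> Pow VH)"
    using assms by (simp add: simple_graph_def)
qed

lemma bip_k2_le_min_card:
  assumes "simple_graph VH EH" and "(A, B) \<in> bipartitions VH EH"
  shows "bip_k2 VH EH \<le> min (card A) (card B)"
proof -
  have "min (card A) (card B) \<in> (\<lambda>(A, B). min (card A) (card B)) ` bipartitions VH EH"
    using assms(2) by force
  then show ?thesis
    unfolding bip_k2_def by (rule Min_le[OF finite_imageI[OF finite_bipartitions[OF assms(1)]]])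
qed

lemma bip_k1_le_max_card:
  assumes "simple_graph VH EH" and "(A, B) \<in> bipartitions VH EH"
  shows "bip_k1 VH EH \<le> max (card A) (card B)"
proof -
  have "max (card A) (card B) \<in> (\<lambda>(A, B). max (card A) (card B)) ` bipartitions VH EH"
    using assms(2) by force
  then show ?thesis
    unfolding bip_k1_def by (rule Min_le[OF finite_imageI[OF finite_bipartitions[OF assms(1)]]])
qed

lemma bip_k2_le_bip_k1:
  assumes "simple_graph VH EH" and "bipartite VH EH"
  shows "bip_k2 VH EH \<le> bip_k1 VH EH"
proof -
  have "bip_k1 VH EH \<in> (\<lambda>(A, B). max (card A) (card B)) ` bipartitions VH EH"
    unfolding bip_k1_def using assms
    by (intro Min_in finite_imageI finite_bipartitions) (auto simp: bipartite_def)
  then obtain A B where AB: "(A, B) \<in> bipartitions VH EH" "bip_k1 VH EH = max (card A) (card B)"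
    by auto
  with bip_k2_le_min_card[OF assms(1) AB(1)] show ?thesis
    by (simp add: min_def max_def split: if_splits)
qed

text \<open>Stated with \<open>T - S\<close> so that the degenerate case \<open>S = T\<close> of a single colour class,
  where \<open>B\<close> must be empty, is covered as well.\<close>

lemma induced_copy_bipartition:
  assumes "has_induced_copy VH EH (S \<union> T) E"
    and "independent E S" and "independent E T" and "finite S" and "finite T"
  obtains A B where "(A, B) \<in> bipartitions VH EH" and "card A \<le> card S" and "card B \<le> card (T - S)"
proof -
  obtain f where inj: "inj_on f VH" and into: "f ` VH \<subseteq> S \<union> T"
    and iso: "\<forall>u\<in>VH. \<forall>v\<in>VH. EH u v \<longleftrightarrow> E (f u) (f v)"
    using assms(1) unfolding has_induced_copy_def by blast
  define A where "A = {u \<in> VH. f u \<in> S}"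
  define B where "B = VH - A"
  have "f ` A \<subseteq> S" and "f ` B \<subseteq> T - S"
    using into unfolding A_def B_def by auto
  have independent_preimage: "independent EH X" if "X \<subseteq> VH" "f ` X \<subseteq> Y" "independent E Y" for X Y
    using that iso unfolding independent_def by (metis image_subset_iff subsetD)
  have "independent EH A"
    using independent_preimage[of A S] \<open>f ` A \<subseteq> S\<close> assms(2) by (auto simp: A_def)
  moreover have "independent EH B"
    using independent_preimage[of B T] \<open>f ` B \<subseteq> T - S\<close> assms(3) by (auto simp: B_def)
  moreover have "A \<union> B = VH" "A \<inter> B = {}"
    unfolding B_def A_def by auto
  ultimately have "(A, B) \<in> bipartitions VH EH"
    unfolding bipartitions_def by simp
  moreover have "card A \<le> card S"
    using inj \<open>f ` A \<subseteq> S\<close> assms(4)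
    by (intro card_inj_on_le[of f]) (auto simp: A_def intro: inj_on_subset)
  moreover have "card B \<le> card (T - S)"
    using inj \<open>f ` B \<subseteq> T - S\<close> assms(5)
    by (intro card_inj_on_le[of f]) (auto simp: B_def intro: inj_on_subset)
  ultimately show ?thesis
    by (rule that)
qed

definition small_pair :: "'b set \<Rightarrow> ('b \<Rightarrow> 'b \<Rightarrow> bool) \<Rightarrow> 'a set \<Rightarrow> 'a set \<Rightarrow> bool" where
  "small_pair VH EH P Q \<longleftrightarrow>
     min (card P) (card Q) < bip_k2 VH EH \<or> max (card P) (card Q) < bip_k1 VH EH"

lemma independent_color_class:
  assumes "proper_coloring V E c k"
  shows "independent E {v \<in> V. c v = i}"
  using assms unfolding proper_coloring_def independent_def by blast

definition block_of :: "'a set set \<Rightarrow> 'a \<Rightarrow> 'a set" where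
  "block_of PP v = (THE P. P \<in> PP \<and> v \<in> P)"

lemma block_of_eq:
  assumes "partition_on V PP" and "P \<in> PP" and "v \<in> P"
  shows "block_of PP v = P"
  unfolding block_of_def
proof (rule the1_equality)
  have "Q = P" if "Q \<in> PP" "v \<in> Q" for Q
    using disjointD[OF partition_onD2[OF assms(1)]] assms(2,3) that by blast
  with assms(2,3) show "\<exists>!P. P \<in> PP \<and> v \<in> P"
    by (intro ex1I[of _ P]) blast+
qed (use assms(2,3) in blast)

lemma block_of_mem:
  assumes "partition_on V PP" and "v \<in> V"
  shows "block_of PP v \<in> PP" and "v \<in> block_of PP v"
proof -
  have "v \<in> \<Union>PP"
    using partition_onD1[OF assms(1)] assms(2) by simp
  then obtain P where "P \<in> PP" "v \<in> P"
    by blast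
  then show "block_of PP v \<in> PP" "v \<in> block_of PP v"
    using block_of_eq[OF assms(1)] by simp_all
qed

lemma proper_coloring_of_partition:
  assumes G: "simple_graph V E" and PP: "partition_on V PP" and ind: "\<forall>P\<in>PP. independent E P"
  obtains c where "proper_coloring V E c (card PP)"
    and "\<And>i. {v \<in> V. c v = i} = {} \<or> {v \<in> V. c v = i} \<in> PP"
proof -
  have "finite V"
    using G by (simp add: simple_graph_def)
  obtain h where h: "bij_betw h PP {0..<card PP}"
    using ex_bij_betw_finite_nat[OF finite_elements[OF \<open>finite V\<close> PP]] by blast
  define c where "c v = h (block_of PP v)" for v
  have same_color: "c u = c v \<longleftrightarrow> block_of PP u = block_of PP v" if "u \<in> V" "v \<in> V" for u v
    unfolding c_def using inj_on_eq_iff[OF bij_betw_imp_inj_on[OF h]] block_of_mem[OF PP] that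
    by blast
  have color_class: "{v \<in> V. c v = c u} = block_of PP u" if "u \<in> V" for u
  proof (intro equalityI subsetI)
    show "v \<in> block_of PP u" if "v \<in> {v \<in> V. c v = c u}" for v
    proof -
      have "v \<in> V" "c v = c u"
        using that by simp_all
      then have "block_of PP v = block_of PP u"
        using same_color \<open>u \<in> V\<close> by blast
      then show ?thesis
        using block_of_mem(2)[OF PP \<open>v \<in> V\<close>] by simp
    qed
    show "v \<in> {v \<in> V. c v = c u}" if "v \<in> block_of PP u" for v
    proof -
      have "v \<in> V"
        using PP block_of_mem(1)[OF PP \<open>u \<in> V\<close>] that unfolding partition_on_def by blast
      then show ?thesis
        using block_of_eq[OF PP block_of_mem(1)[OF PP \<open>u \<in> V\<close>] that] unfolding c_def by simp
    qed
  qed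
  have "proper_coloring V E c (card PP)"
    unfolding proper_coloring_def
  proof (intro conjI ballI allI impI)
    show "c v < card PP" if "v \<in> V" for v
      using bij_betwE[OF h] block_of_mem(1)[OF PP that] unfolding c_def by auto
    show "c u \<noteq> c v" if "E u v" for u v
    proof
      assume "c u = c v"
      have "u \<in> V" "v \<in> V"
        using G that unfolding simple_graph_def by blast+
      with \<open>c u = c v\<close> have "block_of PP v = block_of PP u"
        using same_color by simp
      then have "u \<in> block_of PP u" "v \<in> block_of PP u"
        using block_of_mem(2)[OF PP] \<open>u \<in> V\<close> \<open>v \<in> V\<close> by metis+
      moreover have "independent E (block_of PP u)"
        using ind block_of_mem(1)[OF PP \<open>u \<in> V\<close>] by blast
      ultimately show False
        using that unfolding independent_def by blast
    qed
  qed
  moreover have "{v \<in> V. c v = i} = {} \<or> {v \<in> V. c v = i} \<in> PP" for i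
  proof (cases "\<exists>u\<in>V. c u = i")
    case True
    then obtain u where "u \<in> V" "c u = i"
      by blast
    then show ?thesis
      using color_class[OF \<open>u \<in> V\<close>] block_of_mem(1)[OF PP \<open>u \<in> V\<close>] by simp
  qed simp
  ultimately show ?thesis
    using that by blast
qed

lemma chi_H_le_card_partition:
  assumes H: "simple_graph VH EH" and G: "simple_graph V E" and k2: "bip_k2 VH EH \<ge> 1"
    and PP: "partition_on V PP" and ind: "\<forall>P\<in>PP. independent E P"
    and small: "\<forall>P\<in>PP. \<forall>Q\<in>PP. P \<noteq> Q \<longrightarrow> small_pair VH EH P Q"
  shows "chi_H VH EH V E \<le> card PP"
proof -
  obtain c where c: "proper_coloring V E c (card PP)"
    and classes: "\<And>i. {v \<in> V. c v = i} = {} \<or> {v \<in> V. c v = i} \<in> PP"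
    using proper_coloring_of_partition[OF G PP ind] by blast
  have "\<not> has_induced_copy VH EH {v \<in> V. c v = i \<or> c v = j} E" for i j
  proof
    define S where "S = {v \<in> V. c v = i}"
    define T where "T = {v \<in> V. c v = j}"
    assume "has_induced_copy VH EH {v \<in> V. c v = i \<or> c v = j} E"
    moreover have "{v \<in> V. c v = i \<or> c v = j} = S \<union> T"
      unfolding S_def T_def by blast
    ultimately have copy: "has_induced_copy VH EH (S \<union> T) E"
      by simp
    have "independent E S" "independent E T"
      unfolding S_def T_def by (rule independent_color_class[OF c])+
    moreover have "finite S" "finite T"
      using G unfolding S_def T_def simple_graph_def by auto
    ultimately obtain A B where AB: "(A, B) \<in> bipartitions VH EH"
      and "card A \<le> card S" and "card B \<le> card (T - S)"
      using induced_copy_bipartition[OF copy] by blast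
    then have k2_le: "bip_k2 VH EH \<le> card S" "bip_k2 VH EH \<le> card (T - S)"
      and k1_le: "bip_k1 VH EH \<le> max (card S) (card (T - S))"
      using bip_k2_le_min_card[OF H AB] bip_k1_le_max_card[OF H AB] by auto
    with k2 have "S \<noteq> {}" "\<not> T \<subseteq> S"
      using card_gt_0_iff[of S] card_gt_0_iff[of "T - S"] by auto
    then have "S \<in> PP" "T \<in> PP" "S \<noteq> T"
      using classes unfolding S_def T_def by blast+
    then have "T - S = T"
      using disjointD[OF partition_onD2[OF PP]] by blast
    moreover have "small_pair VH EH S T"
      using small \<open>S \<in> PP\<close> \<open>T \<in> PP\<close> \<open>S \<noteq> T\<close> by blast
    ultimately show False
      using k2_le k1_le unfolding small_pair_def by auto
  qed
  with c have "H_avoiding_coloring VH EH V E c (card PP)"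
    unfolding H_avoiding_coloring_def by blast
  then show ?thesis
    unfolding chi_H_def by (blast intro: Least_le)
qed

lemma partition_on_bounded_blocks:
  assumes "finite C" and "m \<ge> 1"
  shows "\<exists>Q. partition_on C Q \<and> (\<forall>P\<in>Q. card P \<le> m) \<and> card Q * m < card C + m"
  using assms(1)
proof (induction "card C" arbitrary: C rule: less_induct)
  case less
  show ?case
  proof (cases "card C \<le> m")
    case True
    show ?thesis
    proof (cases "C = {}")
      case True
      then show ?thesis
        using \<open>m \<ge> 1\<close> by (intro exI[of _ "{}"]) (simp add: partition_on_empty)
    next
      case False
      then have "partition_on C {C}"
        by (rule partition_on_space)
      moreover have "card {C} * m < card C + m"
        using False less.prems by (simp add: card_gt_0_iff)
      ultimately show ?thesis
        using \<open>card C \<le> m\<close> by blast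
    qed
  next
    case False
    then have "m \<le> card C"
      by simp
    then obtain D where D: "D \<subseteq> C" "card D = m"
      by (rule obtain_subset_with_card_n)
    have card_diff: "card (C - D) = card C - m"
      using D less.prems by (simp add: card_Diff_subset finite_subset)
    then have "card (C - D) < card C"
      using \<open>m \<ge> 1\<close> False by simp
    moreover have "finite (C - D)"
      using less.prems by simp
    ultimately obtain Q where Q: "partition_on (C - D) Q"
      "\<forall>P\<in>Q. card P \<le> m" "card Q * m < card (C - D) + m"
      using less.hyps by blast
    have "\<Union>Q = C - D"
      using partition_onD1[OF Q(1)] by simp
    moreover have "D \<noteq> {}"
      using D(2) \<open>m \<ge> 1\<close> by auto
    ultimately have "partition_on C (insert D Q)"
      using Q(1) D(1) by (subst partition_on_insert) (auto simp: disjnt_def)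
    moreover have "card (insert D Q) * m < card C + m"
    proof -
      have "card (insert D Q) \<le> Suc (card Q)"
        by (rule card_insert_le_m1) simp_all
      then have "card (insert D Q) * m \<le> card Q * m + m"
        using mult_le_mono1[of "card (insert D Q)" "Suc (card Q)" m] by simp
      then show ?thesis
        using Q(3) card_diff False by linarith
    qed
    moreover have "\<forall>P\<in>insert D Q. card P \<le> m"
      using Q(2) D(2) by simp
    ultimately show ?thesis
      by blast
  qed
qed

lemma refines_UN_partitions:
  assumes PP: "partition_on A PP" and S: "\<And>P. P \<in> PP \<Longrightarrow> partition_on P (S P)"
  shows "refines A (\<Union>P\<in>PP. S P) PP"
  unfolding refines_def
proof (intro conjI ballI PP)
  have sub: "X \<subseteq> P" if "P \<in> PP" "X \<in> S P" for P X
    using S[OF that(1)] that(2) unfolding partition_on_def by blast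
  show "\<exists>Y\<in>PP. X \<subseteq> Y" if "X \<in> (\<Union>P\<in>PP. S P)" for X
    using that sub by blast
  show "partition_on A (\<Union>P\<in>PP. S P)"
  proof (rule partition_onI)
    have "\<Union>(\<Union>P\<in>PP. S P) = (\<Union>P\<in>PP. \<Union>(S P))"
      by blast
    also have "\<dots> = \<Union>PP"
      using S unfolding partition_on_def by simp
    also have "\<dots> = A"
      using PP unfolding partition_on_def by simp
    finally show "\<Union>(\<Union>P\<in>PP. S P) = A" .
    show "{} \<notin> (\<Union>P\<in>PP. S P)"
      using partition_onD3[OF S] by blast
    fix X Y assume "X \<in> (\<Union>P\<in>PP. S P)" "Y \<in> (\<Union>P\<in>PP. S P)" "X \<noteq> Y"
    then obtain P Q where PQ: "P \<in> PP" "X \<in> S P" "Q \<in> PP" "Y \<in> S Q"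
      by (elim UN_E)
    show "disjnt X Y"
    proof (cases "P = Q")
      case True
      then show ?thesis
        using pairwiseD[OF partition_onD2[OF S[OF PQ(1)]]] PQ \<open>X \<noteq> Y\<close> by simp
    next
      case False
      then have "disjnt P Q"
        using pairwiseD[OF partition_onD2[OF PP]] PQ by simp
      then show ?thesis
        using sub PQ by (meson disjnt_subset1 disjnt_subset2)
    qed
  qed
qed

lemma refine_into_small_blocks:
  assumes V: "finite V" and PP: "partition_on V PP" and K: "K \<subseteq> PP" and m: "m \<ge> 1"
  obtains QQ where "refines V QQ PP" and "\<forall>Q\<in>QQ. Q \<in> K \<or> card Q \<le> m"
    and "card QQ * m \<le> card K * m + (\<Sum>P\<in>PP - K. card P + (m - 1))"
proof -
  have finite_blocks: "finite P" if "P \<in> PP" for P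
  proof (rule finite_subset[OF _ V])
    show "P \<subseteq> V"
      using PP that unfolding partition_on_def by blast
  qed
  have "\<forall>P\<in>PP - K. \<exists>Q. partition_on P Q \<and> (\<forall>X\<in>Q. card X \<le> m) \<and> card Q * m < card P + m"
    using partition_on_bounded_blocks[OF finite_blocks m] by blast
  then obtain split where split: "\<forall>P\<in>PP - K. partition_on P (split P)
      \<and> (\<forall>X\<in>split P. card X \<le> m) \<and> card (split P) * m < card P + m"
    by (rule bchoice[elim_format]) blast
  define S where "S P = (if P \<in> K then {P} else split P)" for P
  have "partition_on P (S P)" if "P \<in> PP" for P
  proof (cases "P \<in> K")
    case True
    have "P \<noteq> {}"
      using partition_onD3[OF PP] that by blast
    with True show ?thesis
      unfolding S_def by (simp add: partition_on_space)
  next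
    case False
    with split that show ?thesis
      unfolding S_def by simp
  qed
  then have "refines V (\<Union>P\<in>PP. S P) PP"
    using refines_UN_partitions[OF PP] by blast
  moreover have "\<forall>Q\<in>(\<Union>P\<in>PP. S P). Q \<in> K \<or> card Q \<le> m"
    using split unfolding S_def by auto
  moreover have "card (\<Union>P\<in>PP. S P) * m \<le> card K * m + (\<Sum>P\<in>PP - K. card P + (m - 1))"
  proof -
    have "finite PP"
      using V PP finite_elements by blast
    have "card (\<Union>P\<in>PP. S P) * m \<le> (\<Sum>P\<in>PP. card (S P) * m)"
      using mult_le_mono1[OF card_UN_le[OF \<open>finite PP\<close>, of S], of m] by (simp add: sum_distrib_right)
    also have "\<dots> = (\<Sum>P\<in>K. card (S P) * m) + (\<Sum>P\<in>PP - K. card (S P) * m)"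
      using sum.subset_diff[OF K \<open>finite PP\<close>] by (simp add: add.commute)
    also have "\<dots> \<le> card K * m + (\<Sum>P\<in>PP - K. card P + (m - 1))"
    proof (rule add_mono)
      show "(\<Sum>P\<in>K. card (S P) * m) \<le> card K * m"
        unfolding S_def by simp
      show "(\<Sum>P\<in>PP - K. card (S P) * m) \<le> (\<Sum>P\<in>PP - K. card P + (m - 1))"
      proof (rule sum_mono)
        fix P assume "P \<in> PP - K"
        then have "card (S P) * m < card P + m"
          using split unfolding S_def by simp
        with m show "card (S P) * m \<le> card P + (m - 1)"
          by linarith
      qed
    qed
    finally show ?thesis .
  qed
  ultimately show ?thesis
    using that by blast
qed

lemma partition_on_color_classes:
  assumes "proper_coloring V E c k"
  shows "partition_on V ((\<lambda>i. {v \<in> V. c v = i}) ` {..<k} - {{}})"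
proof (rule partition_onI)
  show "\<Union>((\<lambda>i. {v \<in> V. c v = i}) ` {..<k} - {{}}) = V"
    using assms unfolding proper_coloring_def by auto
  show "disjnt p q" if "p \<in> (\<lambda>i. {v \<in> V. c v = i}) ` {..<k} - {{}}"
    and "q \<in> (\<lambda>i. {v \<in> V. c v = i}) ` {..<k} - {{}}" and "p \<noteq> q" for p q
    using that by (auto simp: disjnt_def)
qed simp

lemma chromatic_number_coloring:
  assumes G: "simple_graph V E"
  obtains c where "proper_coloring V E c (chromatic_number V E)"
proof -
  have "partition_on V ((\<lambda>v. {v}) ` V)"
    by (rule partition_on_singletons)
  moreover have "\<forall>P\<in>(\<lambda>v. {v}) ` V. independent E P"
    using G by (simp add: independent_def simple_graph_def)
  ultimately obtain c where "proper_coloring V E c (card ((\<lambda>v. {v}) ` V))"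
    by (rule proper_coloring_of_partition[OF G])
  then have "\<exists>c. proper_coloring V E c (chromatic_number V E)"
    unfolding chromatic_number_def by (blast intro: LeastI_ex[of "\<lambda>k. \<exists>c. proper_coloring V E c k"])
  then show ?thesis
    using that by blast
qed

lemma chromatic_partition:
  assumes "simple_graph V E"
  obtains PP where "partition_on V PP" and "\<forall>P\<in>PP. independent E P"
    and "card PP \<le> chromatic_number V E"
proof -
  obtain c where c: "proper_coloring V E c (chromatic_number V E)"
    using chromatic_number_coloring[OF assms] .
  let ?PP = "(\<lambda>i. {v \<in> V. c v = i}) ` {..<chromatic_number V E} - {{}}"
  have "card ?PP \<le> card ((\<lambda>i. {v \<in> V. c v = i}) ` {..<chromatic_number V E})"
    by (rule card_Diff1_le)
  also have "\<dots> \<le> chromatic_number V E"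
    using card_image_le[of "{..<chromatic_number V E}"] by simp
  finally have "card ?PP \<le> chromatic_number V E" .
  moreover have "\<forall>P\<in>?PP. independent E P"
    using independent_color_class[OF c] by blast
  ultimately show ?thesis
    using that partition_on_color_classes[OF c] by blast
qed

lemma chi_H_le_refinement:
  assumes H: "simple_graph VH EH" and G: "simple_graph V E" and k2: "bip_k2 VH EH \<ge> 1"
    and PP: "partition_on V PP" and ind: "\<forall>P\<in>PP. independent E P"
    and K: "K \<subseteq> PP" "card K \<le> 1" and m: "m \<ge> 1"
    and m_small: "m < bip_k2 VH EH \<or> (K = {} \<and> m < bip_k1 VH EH)"
  shows "chi_H VH EH V E * m \<le> card K * m + (\<Sum>P\<in>PP - K. card P + (m - 1))"
proof -
  have "finite V"
    using G by (simp add: simple_graph_def)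
  then obtain QQ where QQ: "refines V QQ PP" and blocks: "\<forall>Q\<in>QQ. Q \<in> K \<or> card Q \<le> m"
    and count: "card QQ * m \<le> card K * m + (\<Sum>P\<in>PP - K. card P + (m - 1))"
    using refine_into_small_blocks[OF _ PP K(1) m] by blast
  have "partition_on V QQ" and coarser: "\<forall>Q\<in>QQ. \<exists>P\<in>PP. Q \<subseteq> P"
    using QQ unfolding refines_def by simp_all
  have "independent E Q" if Q: "Q \<in> QQ" for Q
  proof -
    obtain P where "P \<in> PP" "Q \<subseteq> P"
      using coarser Q by blast
    then show ?thesis
      using ind unfolding independent_def by blast
  qed
  moreover have "small_pair VH EH Q1 Q2" if "Q1 \<in> QQ" "Q2 \<in> QQ" "Q1 \<noteq> Q2" for Q1 Q2
  proof -
    have "finite K"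
      using finite_subset[OF K(1) finite_elements[OF \<open>finite V\<close> PP]] .
    then have "\<not> (Q1 \<in> K \<and> Q2 \<in> K)"
      using card_le_Suc0_iff_eq K(2) that(3) by auto
    then have "card Q1 \<le> m \<or> card Q2 \<le> m"
      using blocks that(1,2) by blast
    moreover have "card Q1 \<le> m \<and> card Q2 \<le> m" if "K = {}"
      using blocks \<open>Q1 \<in> QQ\<close> \<open>Q2 \<in> QQ\<close> that by blast
    ultimately show ?thesis
      using m_small unfolding small_pair_def by (auto simp: min_def max_def)
  qed
  ultimately have "chi_H VH EH V E \<le> card QQ"
    using chi_H_le_card_partition[OF H G k2 \<open>partition_on V QQ\<close>] by blast
  then show ?thesis
    using count by (meson le_trans mult_le_mono1)
qed

lemma sum_card_partition_on:
  assumes "finite V" and "partition_on V PP"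
  shows "(\<Sum>P\<in>PP. card P) = card V"
  using sum.partition[OF assms, of "\<lambda>_. 1::nat"] by simp

lemma chi_H_k1_bound:
  assumes H: "simple_graph VH EH" and bip: "bipartite VH EH" and G: "simple_graph V E"
    and k2: "bip_k2 VH EH \<ge> 2"
  defines "k \<equiv> real (bip_k1 VH EH)"
  shows "real (chi_H VH EH V E) \<le> real (card V) / (k - 1) + (k - 2) / (k - 1) * real (chromatic_number V E)"
proof -
  define m where "m = bip_k1 VH EH - 1"
  have "bip_k1 VH EH \<ge> 2"
    using bip_k2_le_bip_k1[OF H bip] k2 by linarith
  then have m: "m \<ge> 1" "m < bip_k1 VH EH" "real m = k - 1" "real (m - 1) = k - 2"
    unfolding m_def k_def by (simp_all add: of_nat_diff)
  obtain PP where PP: "partition_on V PP" and ind: "\<forall>P\<in>PP. independent E P"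
    and card_PP: "card PP \<le> chromatic_number V E"
    using chromatic_partition[OF G] by blast
  have "finite V"
    using G by (simp add: simple_graph_def)
  have "chi_H VH EH V E * m \<le> (\<Sum>P\<in>PP. card P + (m - 1))"
    using chi_H_le_refinement[OF H G _ PP ind, of "{}" m] k2 m by simp
  also have "\<dots> = card V + card PP * (m - 1)"
    using sum_card_partition_on[OF \<open>finite V\<close> PP] by (simp add: sum.distrib)
  also have "\<dots> \<le> card V + chromatic_number V E * (m - 1)"
    using card_PP by simp
  finally have "real (chi_H VH EH V E * m) \<le> real (card V + chromatic_number V E * (m - 1))"
    by (rule of_nat_mono)
  then have "real (chi_H VH EH V E) * (k - 1) \<le> real (card V) + real (chromatic_number V E) * (k - 2)"
    using m by simp
  moreover have "k - 1 > 0"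
    using m by linarith
  ultimately have "real (chi_H VH EH V E) \<le> (real (card V) + real (chromatic_number V E) * (k - 2)) / (k - 1)"
    by (simp add: pos_le_divide_eq)
  then show ?thesis
    by (simp add: add_divide_distrib mult.commute)
qed

lemma partition_on_large_block:
  assumes "finite V" and "partition_on V PP" and "PP \<noteq> {}"
  obtains P0 where "P0 \<in> PP" and "card V \<le> card PP * card P0"
proof -
  have "finite PP"
    using finite_elements[OF assms(1,2)] .
  with assms(3) have "Max (card ` PP) \<in> card ` PP"
    by simp
  then obtain P0 where P0: "P0 \<in> PP" "card P0 = Max (card ` PP)"
    by (metis imageE)
  have "card V = (\<Sum>P\<in>PP. card P)"
    using sum_card_partition_on[OF assms(1,2)] by simp
  also have "\<dots> \<le> (\<Sum>P\<in>PP. card P0)"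
    using P0(2) \<open>finite PP\<close> by (intro sum_mono) simp
  finally show ?thesis
    using that P0(1) by simp
qed

text \<open>Keep a largest colour class \<open>P0\<close> whole and cut the others into pieces of size at most
  \<open>k2 - 1\<close>; the witness \<open>c0\<close> is \<open>|P0|\<close>.\<close>

lemma chi_H_k2_count:
  assumes H: "simple_graph VH EH" and G: "simple_graph V E" and k2: "bip_k2 VH EH \<ge> 2"
  obtains c0 where "chi_H VH EH V E * (bip_k2 VH EH - 1) + c0 + (bip_k2 VH EH - 2)
      \<le> (bip_k2 VH EH - 1) + card V + chromatic_number V E * (bip_k2 VH EH - 2)"
    and "card V \<le> chromatic_number V E * c0"
proof -
  define m where "m = bip_k2 VH EH - 1"
  have m: "m \<ge> 1" "m < bip_k2 VH EH" "m - 1 = bip_k2 VH EH - 2"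
    using k2 unfolding m_def by simp_all
  obtain PP where PP: "partition_on V PP" and ind: "\<forall>P\<in>PP. independent E P"
    and card_PP: "card PP \<le> chromatic_number V E"
    using chromatic_partition[OF G] by blast
  have "finite V"
    using G by (simp add: simple_graph_def)
  show ?thesis
  proof (cases "PP = {}")
    case True
    then have "V = {}"
      using PP by (simp add: partition_on_def)
    have "chi_H VH EH V E \<le> card PP"
      by (rule chi_H_le_card_partition[OF H G _ PP ind]) (use k2 True in simp_all)
    with True \<open>V = {}\<close> show ?thesis
      using that[of 0] by simp
  next
    case False
    then obtain P0 where P0: "P0 \<in> PP" "card V \<le> card PP * card P0"
      using partition_on_large_block[OF \<open>finite V\<close> PP] by blast
    have "finite PP"
      using finite_elements[OF \<open>finite V\<close> PP] .
    have "chi_H VH EH V E * m \<le> card {P0} * m + (\<Sum>P\<in>PP - {P0}. card P + (m - 1))"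
      using chi_H_le_refinement[OF H G _ PP ind, of "{P0}" m] k2 m(1,2) P0(1) by simp
    moreover have "(\<Sum>P\<in>PP. card P + (m - 1))
        = (card P0 + (m - 1)) + (\<Sum>P\<in>PP - {P0}. card P + (m - 1))"
      using sum.remove[OF \<open>finite PP\<close> P0(1)] .
    moreover have "(\<Sum>P\<in>PP. card P + (m - 1)) = card V + card PP * (m - 1)"
      using sum_card_partition_on[OF \<open>finite V\<close> PP] by (simp add: sum.distrib)
    ultimately have "chi_H VH EH V E * m + card P0 + (m - 1) \<le> m + card V + card PP * (m - 1)"
      by simp
    then have "chi_H VH EH V E * m + card P0 + (m - 1) \<le> m + card V + chromatic_number V E * (m - 1)"
      using mult_le_mono1[OF card_PP, of "m - 1"] by linarith
    moreover have "card V \<le> chromatic_number V E * card P0"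
      using P0(2) card_PP by (meson le_trans mult_le_mono1)
    ultimately show ?thesis
      by (rule that[of "card P0", unfolded m_def[symmetric] m(3)[symmetric]])
  qed
qed

lemma chi_H_k2_bound:
  assumes H: "simple_graph VH EH" and G: "simple_graph V E" and k2: "bip_k2 VH EH \<ge> 2"
  defines "\<chi> \<equiv> real (chromatic_number V E)" and "k \<equiv> real (bip_k2 VH EH)"
  shows "real (chi_H VH EH V E)
    \<le> real (card V) / (k - 1) * (1 - 1 / \<chi>) + (k - 2) / (k - 1) * (\<chi> - 1) + 1"
proof -
  obtain c0 where count: "chi_H VH EH V E * (bip_k2 VH EH - 1) + c0 + (bip_k2 VH EH - 2)
      \<le> (bip_k2 VH EH - 1) + card V + chromatic_number V E * (bip_k2 VH EH - 2)"
    and large: "card V \<le> chromatic_number V E * c0"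
    using chi_H_k2_count[OF H G k2] by blast
  have "real (bip_k2 VH EH - 1) = k - 1" "real (bip_k2 VH EH - 2) = k - 2"
    using k2 unfolding k_def by (simp_all add: of_nat_diff)
  moreover have "real (chi_H VH EH V E) * real (bip_k2 VH EH - 1) + real c0 + real (bip_k2 VH EH - 2)
      \<le> real (bip_k2 VH EH - 1) + real (card V) + \<chi> * real (bip_k2 VH EH - 2)"
    using of_nat_mono[OF count] unfolding \<chi>_def by (simp only: of_nat_add of_nat_mult)
  ultimately have "real (chi_H VH EH V E) * (k - 1) + real c0 + (k - 2)
      \<le> (k - 1) + real (card V) + \<chi> * (k - 2)"
    by simp
  moreover have "real (card V) / \<chi> \<le> real c0"
  proof (cases "\<chi> = 0")
    case False
    have "real (card V) \<le> real c0 * \<chi>"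
      using of_nat_mono[OF large] unfolding \<chi>_def by (simp add: mult.commute)
    with False show ?thesis
      unfolding \<chi>_def by (simp add: pos_divide_le_eq)
  qed simp
  moreover have "k - 1 > 0"
    using k2 unfolding k_def by simp
  ultimately have "real (chi_H VH EH V E)
      \<le> (real (card V) * (1 - 1 / \<chi>) + (\<chi> - 1) * (k - 2) + (k - 1)) / (k - 1)"
    by (simp add: pos_le_divide_eq algebra_simps)
  also have "\<dots> = real (card V) / (k - 1) * (1 - 1 / \<chi>) + (k - 2) / (k - 1) * (\<chi> - 1) + 1"
    using \<open>k - 1 > 0\<close> by (simp add: add_divide_distrib)
  finally show ?thesis .
qed

lemma chi_H_independence_bound:
  assumes H: "simple_graph VH EH" and G: "simple_graph V E" and k2: "bip_k2 VH EH = 2"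
  shows "chi_H VH EH V E + independence_number V E \<le> card V + 1"
proof -
  have "finite V"
    using G by (simp add: simple_graph_def)
  let ?I = "{S. S \<subseteq> V \<and> independent E S}"
  have "finite ?I"
  proof (rule finite_subset)
    show "?I \<subseteq> Pow V"
      by blast
  qed (use \<open>finite V\<close> in simp)
  moreover have "{} \<in> ?I"
    by (simp add: independent_def)
  ultimately have "independence_number V E \<in> card ` ?I"
    unfolding independence_number_def by (intro Max_in finite_imageI) auto
  then obtain S where "S \<in> ?I" and card_S: "independence_number V E = card S"
    by (rule imageE)
  then have S: "S \<subseteq> V" "independent E S"
    by simp_all
  let ?PP = "insert S ((\<lambda>v. {v}) ` (V - S)) - {{}}"
  have "partition_on V ?PP"
    using S(1) by (intro partition_onI) (auto simp: disjnt_def)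
  moreover have "\<forall>P\<in>?PP. independent E P"
    using S(2) G by (auto simp: independent_def simple_graph_def)
  moreover have "\<forall>P\<in>?PP. \<forall>Q\<in>?PP. P \<noteq> Q \<longrightarrow> small_pair VH EH P Q"
    using k2 unfolding small_pair_def by auto
  ultimately have "chi_H VH EH V E \<le> card ?PP"
    using chi_H_le_card_partition[OF H G] k2 by simp
  also have "\<dots> \<le> card (insert S ((\<lambda>v. {v}) ` (V - S)))"
    by (rule card_Diff1_le)
  also have "\<dots> \<le> Suc (card ((\<lambda>v. {v}) ` (V - S)))"
    by (rule card_insert_le_m1) simp_all
  also have "\<dots> \<le> Suc (card (V - S))"
    using card_image_le[of "V - S" "\<lambda>v. {v}"] \<open>finite V\<close> by simp
  also have "\<dots> = Suc (card V - card S)"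
    using S(1) \<open>finite V\<close> by (simp add: card_Diff_subset finite_subset)
  finally show ?thesis
    using card_S card_mono[OF \<open>finite V\<close> S(1)] by linarith
qed

theorem proposition1:
  fixes VH :: "'b set" and EH :: "'b \<Rightarrow> 'b \<Rightarrow> bool"
    and V :: "'a set" and E :: "'a \<Rightarrow> 'a \<Rightarrow> bool"
  assumes "simple_graph VH EH" and "bipartite VH EH"
    and "simple_graph V E"
    and "bip_k2 VH EH \<ge> 2"
  defines "k1 \<equiv> real (bip_k1 VH EH)" and "k2 \<equiv> real (bip_k2 VH EH)"
    and "n \<equiv> real (card V)" and "\<chi> \<equiv> real (chromatic_number V E)"
    and "\<alpha> \<equiv> real (independence_number V E)"
  shows "(bip_k2 VH EH \<ge> 3 \<longrightarrow>
           real (chi_H VH EH V E) \<le> min (n / (k1 - 1) + (k1 - 2) / (k1 - 1) * \<chi>)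
              (n / (k2 - 1) * (1 - 1 / \<chi>) + (k2 - 2) / (k2 - 1) * (\<chi> - 1) + 1))
       \<and> (bip_k2 VH EH = 2 \<longrightarrow>
           real (chi_H VH EH V E) \<le> min (n / (k1 - 1) + (k1 - 2) / (k1 - 1) * \<chi>)
              (n - \<alpha> + 1))"
proof -
  have bound1: "real (chi_H VH EH V E) \<le> n / (k1 - 1) + (k1 - 2) / (k1 - 1) * \<chi>"
    using chi_H_k1_bound[OF assms(1-4)] unfolding k1_def n_def \<chi>_def .
  have bound2:
    "real (chi_H VH EH V E) \<le> n / (k2 - 1) * (1 - 1 / \<chi>) + (k2 - 2) / (k2 - 1) * (\<chi> - 1) + 1"
    using chi_H_k2_bound[OF assms(1,3,4)] unfolding k2_def n_def \<chi>_def .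
  have bound3: "real (chi_H VH EH V E) \<le> n - \<alpha> + 1" if "bip_k2 VH EH = 2"
    using chi_H_independence_bound[OF assms(1,3) that] unfolding n_def \<alpha>_def by linarith
  show ?thesis
    using bound1 bound2 bound3 by simp
qed

end
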